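(* Let $W$ be a stopping time in $\mathcal{T}$ and let $0<\rho<1$. If $Cap_{\mathcal{T}}W\le(1-\rho)^2/4$, then $Cap_{\mathcal{T}}\big(\widehat{W_{\mathcal{T}}^{\rho}},W\big)\le\frac{4}{(1-\rho)^2}Cap_{\mathcal{T}}W$.
   Context: Tree. $\mathcal{T}$ is the rooted dyadic tree whose vertices are the dyadic arcs of the unit circle. The root $o$ is the whole circle. The vertices at level $n\ge0$ are the arcs $\{e^{it}:2\pi j2^{-n}\le t<2\pi(j+1)2^{-n}\}$ for $0\le j<2^n$. Each vertex $x$ has two children, which are the two arcs at the next level contained in it. Write $y\le x$ if $x$ lies in the subtree rooted at $y$, and $y<x$ if moreover $y\ne x$. $[o,x]=\{y:y\le x\}$ and $S(x)=\{y:y\ge x\}$. A stopping time is a set of pairwise incomparable vertices. $\mathcal{G}(\{o\},W)$ is the union of the geodesics $[o,w]$, $w\in W$. Capacity. For $f:\mathcal{T}\to\mathbb{R}$ put $If(x)=\sum_{y\in[o,x]}f(y)$, and define $Cap_{\mathcal{T}}(W)=\inf\{\|f\|^2_{\ell^2(\mathcal{T})}:If\ge1\text{ on }W\}$. For stopping times $E,F$, the condenser capacity is $Cap_{\mathcal{T}}(E,F)=\inf\{\|f\|_{\ell^2(\mathcal{T})}^2: If\ge1\text{ on }F,\ \operatorname{supp}f\subset\bigcup_{e\in E}S(e)\}$. Capacitary blowup. For a stopping time $W$ there is a unique minimizer $h$ of $Cap_{\mathcal{T}}(W)$; set $H=Ih$, so $H=1$ on $W$ and $\|h\|^2=Cap_{\mathcal{T}}W$.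 For $0<\rho<1$, the capacitary blowup is $\widehat{W_{\mathcal{T}}^{\rho}}=\{t\in\mathcal{G}(\{o\},W):H(t)\ge\rho\text{ and }H(x)\le\rho\text{ for all }x<t\}$. *)

theory Defs
  imports "HOL-Analysis.Analysis"
begin

text \<open>The rooted dyadic tree: a vertex (dyadic arc) at level n is encoded by the
  binary word of length n (bool list) describing the successive choices of halves;
  the root o is the empty word, the two children of x are x @ [False] and x @ [True].
  The tree order y \<le> x (x lies in the subtree rooted at y) is the prefix order.\<close>

type_synonym vertex = "bool list"

definition tle :: "vertex \<Rightarrow> vertex \<Rightarrow> bool" where
  "tle y x \<longleftrightarrow> (\<exists>z. x = y @ z)"

definition tless :: "vertex \<Rightarrow> vertex \<Rightarrow> bool" where
  "tless y x \<longleftrightarrow> tle y x \<and> y \<noteq> x"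

definition geod :: "vertex \<Rightarrow> vertex set" where
  "geod x = {y. tle y x}"

definition subtree :: "vertex \<Rightarrow> vertex set" where
  "subtree x = {y. tle x y}"

definition stopping_time :: "vertex set \<Rightarrow> bool" where
  "stopping_time W \<longleftrightarrow> (\<forall>x\<in>W. \<forall>y\<in>W. tle x y \<longrightarrow> x = y)"

definition geodesic_union :: "vertex set \<Rightarrow> vertex set" where
  "geodesic_union W = (\<Union>w\<in>W. geod w)"

definition Iop :: "(vertex \<Rightarrow> real) \<Rightarrow> vertex \<Rightarrow> real" where
  "Iop f x = (\<Sum>y\<in>geod x. f y)"

definition in_l2 :: "(vertex \<Rightarrow> real) \<Rightarrow> bool" where
  "in_l2 f \<longleftrightarrow> (\<lambda>x. (f x)\<^sup>2) summable_on UNIV"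

definition norm2 :: "(vertex \<Rightarrow> real) \<Rightarrow> real" where
  "norm2 f = infsum (\<lambda>x. (f x)\<^sup>2) UNIV"

definition cap_admissible :: "vertex set \<Rightarrow> (vertex \<Rightarrow> real) \<Rightarrow> bool" where
  "cap_admissible W f \<longleftrightarrow> in_l2 f \<and> (\<forall>w\<in>W. Iop f w \<ge> 1)"

text \<open>Capacity (infimum in the extended reals; the infimum of the empty set is \<infinity>).\<close>
definition Cap :: "vertex set \<Rightarrow> ereal" where
  "Cap W = (INF f \<in> {f. cap_admissible W f}. ereal (norm2 f))"

definition condCap :: "vertex set \<Rightarrow> vertex set \<Rightarrow> ereal" where
  "condCap E F = (INF f \<in> {f. in_l2 f \<and> (\<forall>w\<in>F. Iop f w \<ge> 1)
                              \<and> {x. f x \<noteq> 0} \<subseteq> (\<Union>e\<in>E. subtree e)}. ereal (norm2 f))"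

definition cap_minimizer :: "vertex set \<Rightarrow> vertex \<Rightarrow> real" where
  "cap_minimizer W = (THE h. cap_admissible W h \<and> ereal (norm2 h) = Cap W)"

definition cap_potential :: "vertex set \<Rightarrow> vertex \<Rightarrow> real" where
  "cap_potential W = Iop (cap_minimizer W)"

definition cap_blowup :: "vertex set \<Rightarrow> real \<Rightarrow> vertex set" where
  "cap_blowup W \<rho> = {t \<in> geodesic_union W. cap_potential W t \<ge> \<rho>
                       \<and> (\<forall>x. tless x t \<longrightarrow> cap_potential W x \<le> \<rho>)}"

end

theory Submission
  imports Defs
begin

text \<open>The capacitary minimizer h exists by the Hilbert space argument: the admissible functions
  form a convex set, so by the parallelogram law a minimizing sequence is pointwise Cauchy, and
  its pointwise limit is admissible with norm at most the capacity.

  Along the geodesic from the root to w \<in> W the potential H = I h reaches at least 1 at w.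
  Let t be the first vertex on it with H(t) \<ge> \<rho>; then t lies in the blowup, and since the
  mass of h on the proper ancestors of t is H(parent of t) < \<rho> (or 0 if t is the root),
  the mass of h on the segment from t to w is at least 1 - \<rho>. Hence h/(1 - \<rho>), restricted
  to the subtrees rooted at the blowup, is admissible for the condenser capacity, which is
  therefore at most Cap W/(1 - \<rho>)^2.\<close>

lemma tle_iff_take: "tle y x \<longleftrightarrow> length y \<le> length x \<and> y = take (length y) x"
  unfolding tle_def
  by (metis append_eq_conv_conj append_take_drop_id le_add1 length_append)

lemma tle_take_take: "k \<le> j \<Longrightarrow> tle (take k x) (take j x)"
  unfolding tle_iff_take by (simp add: min_def)

lemma geod_eq_image_take: "geod x = (\<lambda>k. take k x) ` {..length x}"
  unfolding geod_def by (auto simp: tle_iff_take intro!: image_eqI)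

lemma Iop_eq_sum_take: "Iop g x = (\<Sum>k\<le>length x. g (take k x))"
proof -
  have "inj_on (\<lambda>k. take k x) {..length x}"
    by (rule inj_onI) (metis atMost_iff length_take min.absorb2)
  then show ?thesis unfolding Iop_def geod_eq_image_take by (simp add: sum.reindex)
qed

lemma Iop_take_eq_sum: "k \<le> length x \<Longrightarrow> Iop g (take k x) = (\<Sum>j\<le>k. g (take j x))"
  unfolding Iop_eq_sum_take by (simp add: min_def)

lemma sum_atMost_split:
  fixes g :: "nat \<Rightarrow> 'a::comm_monoid_add"
  assumes "k \<le> n"
  shows "(\<Sum>j\<le>n. g j) = (\<Sum>j<k. g j) + (\<Sum>j\<in>{k..n}. g j)"
proof -
  have "{..n} = {..<k} \<union> {k..n}" using assms by auto
  then show ?thesis by (simp add: sum.union_disjoint ivl_disj_int)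
qed

subsection \<open>Square-summable functions on the tree\<close>

lemma norm2_nonneg: "0 \<le> norm2 f"
  unfolding norm2_def by (simp add: infsum_nonneg)

lemma sum_sq_le_norm2: "in_l2 f \<Longrightarrow> finite F \<Longrightarrow> (\<Sum>x\<in>F. (f x)\<^sup>2) \<le> norm2 f"
  unfolding norm2_def in_l2_def by (rule finite_sum_le_infsum) auto

lemma sq_le_norm2: "in_l2 f \<Longrightarrow> (f x)\<^sup>2 \<le> norm2 f"
  using sum_sq_le_norm2[of f "{x}"] by simp

lemma norm2_mono:
  assumes "in_l2 g" "\<And>x. \<bar>f x\<bar> \<le> \<bar>g x\<bar>"
  shows "in_l2 f" "norm2 f \<le> norm2 g"
proof -
  have le: "(f x)\<^sup>2 \<le> (g x)\<^sup>2" for x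
    using assms(2)[of x] by (simp add: abs_le_square_iff)
  show "in_l2 f"
    using assms(1) unfolding in_l2_def by (rule summable_on_comparison_test) (simp_all add: le)
  then show "norm2 f \<le> norm2 g"
    using assms(1) unfolding norm2_def in_l2_def by (rule infsum_mono) (rule le)
qed

lemma in_l2_add:
  assumes "in_l2 f" "in_l2 g"
  shows "in_l2 (\<lambda>x. f x + g x)" "in_l2 (\<lambda>x. f x - g x)"
proof -
  have sum: "(\<lambda>x. 2 * ((f x)\<^sup>2 + (g x)\<^sup>2)) summable_on UNIV"
    using assms unfolding in_l2_def by (intro summable_on_cmult_right summable_on_add)
  have "(a + b)\<^sup>2 \<le> 2 * (a\<^sup>2 + b\<^sup>2)" "(a - b)\<^sup>2 \<le> 2 * (a\<^sup>2 + b\<^sup>2)" for a b :: real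
    using sum_squares_ge_zero[of "a - b" 0] sum_squares_ge_zero[of "a + b" 0]
    by (simp_all add: power2_eq_square algebra_simps)
  then show "in_l2 (\<lambda>x. f x + g x)" "in_l2 (\<lambda>x. f x - g x)"
    unfolding in_l2_def by (auto intro: summable_on_comparison_test[OF sum])
qed

lemma sq_divide_eq:
  fixes f :: "vertex \<Rightarrow> real"
  shows "(\<lambda>x. (f x / c)\<^sup>2) = (\<lambda>x. (f x)\<^sup>2 * inverse (c\<^sup>2))"
  by (simp add: power_divide field_simps)

lemma norm2_divide: "norm2 (\<lambda>x. f x / c) = norm2 f / c\<^sup>2"
  unfolding norm2_def sq_divide_eq by (simp add: infsum_cmult_left' divide_inverse)

lemma in_l2_divide: "in_l2 f \<Longrightarrow> in_l2 (\<lambda>x. f x / c)"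
  unfolding in_l2_def sq_divide_eq by (rule summable_on_cmult_left)

lemma parallelogram:
  assumes "in_l2 f" "in_l2 g"
  shows "norm2 (\<lambda>x. f x + g x) + norm2 (\<lambda>x. f x - g x) = 2 * norm2 f + 2 * norm2 g"
proof -
  have sf: "(\<lambda>x. (f x)\<^sup>2) summable_on UNIV" and sg: "(\<lambda>x. (g x)\<^sup>2) summable_on UNIV"
    and sp: "(\<lambda>x. (f x + g x)\<^sup>2) summable_on UNIV" and sm: "(\<lambda>x. (f x - g x)\<^sup>2) summable_on UNIV"
    using assms in_l2_add[OF assms] unfolding in_l2_def by auto
  have "norm2 (\<lambda>x. f x + g x) + norm2 (\<lambda>x. f x - g x)
      = (\<Sum>\<^sub>\<infinity>x. (f x + g x)\<^sup>2 + (f x - g x)\<^sup>2)"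
    unfolding norm2_def by (rule infsum_add[OF sp sm, symmetric])
  also have "\<dots> = (\<Sum>\<^sub>\<infinity>x. 2 * (f x)\<^sup>2 + 2 * (g x)\<^sup>2)"
    by (simp add: power2_eq_square algebra_simps)
  also have "\<dots> = 2 * norm2 f + 2 * norm2 g"
    unfolding norm2_def using sf sg
    by (simp add: infsum_add summable_on_cmult_right infsum_cmult_right)
  finally show ?thesis .
qed

lemma pointwise_limit_in_l2:
  assumes l2: "\<And>n. in_l2 (F n)" and lim: "\<And>x. (\<lambda>n. F n x) \<longlonglongrightarrow> h x"
    and bound: "\<And>n. norm2 (F n) \<le> b n" and "b \<longlonglongrightarrow> c"
  shows "in_l2 h" "norm2 h \<le> c"
proof -
  have finite_sums: "(\<Sum>x\<in>S. (h x)\<^sup>2) \<le> c" if "finite S" for S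
  proof (rule LIMSEQ_le)
    show "(\<lambda>n. \<Sum>x\<in>S. (F n x)\<^sup>2) \<longlonglongrightarrow> (\<Sum>x\<in>S. (h x)\<^sup>2)"
      by (intro tendsto_sum tendsto_power lim)
    show "\<exists>N. \<forall>n\<ge>N. (\<Sum>x\<in>S. (F n x)\<^sup>2) \<le> b n"
      using sum_sq_le_norm2[OF l2 that] bound order_trans by blast
  qed fact
  show "in_l2 h" unfolding in_l2_def
    by (rule nonneg_bdd_above_summable_on) (auto intro!: bdd_aboveI2[of _ _ c] finite_sums)
  then show "norm2 h \<le> c"
    unfolding norm2_def in_l2_def by (rule infsum_le_finite_sums) (rule finite_sums)
qed

subsection \<open>The capacitary minimizer\<close>

lemma cap_admissible_root: "cap_admissible W (\<lambda>x. if x = [] then 1 else 0)"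
proof -
  have "(\<lambda>x. (if x = [] then 1 else 0 :: real)\<^sup>2) summable_on {[]}"
    by simp
  then have "in_l2 (\<lambda>x. if x = [] then 1 else 0)"
    unfolding in_l2_def by (subst (asm) summable_on_cong_neutral) auto
  moreover have "[] \<in> geod w" for w
    by (simp add: geod_def tle_def)
  then have "Iop (\<lambda>x. if x = [] then 1 else 0) w = 1" for w
    unfolding Iop_def by (simp add: geod_eq_image_take)
  ultimately show ?thesis unfolding cap_admissible_def by simp
qed

lemma cap_admissible_midpoint:
  assumes "cap_admissible W f" "cap_admissible W g"
  shows "cap_admissible W (\<lambda>x. (f x + g x) / 2)"
proof -
  have Iop_mid: "Iop (\<lambda>x. (f x + g x) / 2) w = (Iop f w + Iop g w) / 2" for w
    unfolding Iop_def by (simp add: sum.distrib sum_divide_distrib[symmetric])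
  have "1 \<le> Iop (\<lambda>x. (f x + g x) / 2) w" if "w \<in> W" for w
  proof -
    have "1 \<le> Iop f w" "1 \<le> Iop g w"
      using assms that unfolding cap_admissible_def by auto
    then show ?thesis unfolding Iop_mid by simp
  qed
  then show ?thesis
    using assms in_l2_divide[OF in_l2_add(1)] unfolding cap_admissible_def by auto
qed

definition cap_real :: "vertex set \<Rightarrow> real" where
  "cap_real W = Inf (norm2 ` {f. cap_admissible W f})"

lemma cap_real_le_norm2: "cap_admissible W f \<Longrightarrow> cap_real W \<le> norm2 f"
  unfolding cap_real_def by (rule cInf_lower) (auto intro: bdd_belowI2[of _ 0] norm2_nonneg)

lemma cap_real_nonneg: "0 \<le> cap_real W"
  unfolding cap_real_def using cap_admissible_root
  by (intro cInf_greatest) (auto simp: norm2_nonneg)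

lemma cap_real_approx:
  assumes "0 < e"
  obtains f where "cap_admissible W f" "norm2 f < cap_real W + e"
  using cInf_lessD[of "norm2 ` {f. cap_admissible W f}" "cap_real W + e"] cap_admissible_root assms
  unfolding cap_real_def by force

lemma Cap_eq_cap_real: "Cap W = ereal (cap_real W)"
  unfolding Cap_def cap_real_def using cap_admissible_root
  by (subst ereal_Inf') (auto intro: bdd_belowI2[of _ 0] norm2_nonneg simp: image_comp)

text \<open>The parallelogram law applied to f, g and their admissible midpoint.\<close>

lemma cap_admissible_sq_diff_le:
  assumes f: "cap_admissible W f" and g: "cap_admissible W g"
  shows "(f x - g x)\<^sup>2 \<le> 2 * norm2 f + 2 * norm2 g - 4 * cap_real W"
proof -
  have l2: "in_l2 f" "in_l2 g" using f g unfolding cap_admissible_def by auto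
  have "cap_real W \<le> norm2 (\<lambda>x. (f x + g x) / 2)"
    by (rule cap_real_le_norm2[OF cap_admissible_midpoint[OF f g]])
  then have "4 * cap_real W \<le> norm2 (\<lambda>x. f x + g x)"
    by (simp add: norm2_divide)
  moreover have "(f x - g x)\<^sup>2 \<le> norm2 (\<lambda>x. f x - g x)"
    by (rule sq_le_norm2[OF in_l2_add(2)[OF l2]])
  ultimately show ?thesis using parallelogram[OF l2] by linarith
qed

lemma minimizing_sequence_convergent:
  assumes adm: "\<And>n. cap_admissible W (F n)"
    and small: "\<And>n. norm2 (F n) \<le> cap_real W + inverse (real (Suc n))"
  shows "convergent (\<lambda>n. F n x)"
proof -
  have "Cauchy (\<lambda>n. F n x)"
  proof (rule metric_CauchyI)
    fix e :: real assume "0 < e"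
    then obtain M where M: "inverse (real (Suc M)) < e\<^sup>2 / 4"
      using reals_Archimedean[of "e\<^sup>2 / 4"] by auto
    have "dist (F m x) (F n x) < e" if "M \<le> m" "M \<le> n" for m n
    proof -
      have "inverse (real (Suc m)) \<le> inverse (real (Suc M))"
        "inverse (real (Suc n)) \<le> inverse (real (Suc M))"
        using that by (auto intro!: le_imp_inverse_le)
      then have "(F m x - F n x)\<^sup>2 < e\<^sup>2"
        using cap_admissible_sq_diff_le[OF adm adm, of m x n] small[of m] small[of n] M
        by linarith
      then show ?thesis
        using \<open>0 < e\<close> by (metis abs_le_square_iff abs_of_pos not_le dist_real_def)
    qed
    then show "\<exists>M. \<forall>m\<ge>M. \<forall>n\<ge>M. dist (F m x) (F n x) < e" by blast
  qed
  then show ?thesis by (simp add: Cauchy_convergent_iff)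
qed

lemma cap_minimizer_exists: "\<exists>h. cap_admissible W h \<and> norm2 h = cap_real W"
proof -
  have "\<exists>f. cap_admissible W f \<and> norm2 f \<le> cap_real W + inverse (real (Suc n))" for n
  proof -
    have "0 < inverse (real (Suc n))" by simp
    then show ?thesis by (rule cap_real_approx) (blast intro: less_imp_le)
  qed
  then obtain F where adm: "\<And>n. cap_admissible W (F n)"
    and small: "\<And>n. norm2 (F n) \<le> cap_real W + inverse (real (Suc n))"
    by metis
  define h where "h x = lim (\<lambda>n. F n x)" for x
  have lim: "(\<lambda>n. F n x) \<longlonglongrightarrow> h x" for x
    unfolding h_def using minimizing_sequence_convergent[OF adm small]
    by (simp add: convergent_LIMSEQ_iff)
  have bound: "(\<lambda>n. cap_real W + inverse (real (Suc n))) \<longlonglongrightarrow> cap_real W"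
    using tendsto_add[OF tendsto_const LIMSEQ_inverse_real_of_nat] by simp
  have l2: "in_l2 (F n)" for n using adm unfolding cap_admissible_def by simp
  have "1 \<le> Iop h w" if "w \<in> W" for w
  proof (rule LIMSEQ_le_const)
    show "(\<lambda>n. Iop (F n) w) \<longlonglongrightarrow> Iop h w"
      unfolding Iop_def by (intro tendsto_sum lim)
  qed (use adm that in \<open>auto simp: cap_admissible_def\<close>)
  then have "cap_admissible W h"
    using pointwise_limit_in_l2(1)[OF l2 lim small bound] unfolding cap_admissible_def by simp
  moreover have "norm2 h \<le> cap_real W"
    by (rule pointwise_limit_in_l2(2)[OF l2 lim small bound])
  ultimately show ?thesis using cap_real_le_norm2 by force
qed

lemma cap_minimizer_unique:
  assumes "cap_admissible W f" "norm2 f = cap_real W" "cap_admissible W g" "norm2 g = cap_real W"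
  shows "f = g"
proof
  fix x
  show "f x = g x"
    using cap_admissible_sq_diff_le[OF assms(1,3), of x] assms(2,4) by simp
qed

lemma cap_minimizer:
  "cap_admissible W (cap_minimizer W)" "norm2 (cap_minimizer W) = cap_real W"
proof -
  obtain h where h: "cap_admissible W h" "norm2 h = cap_real W"
    using cap_minimizer_exists by blast
  have "cap_minimizer W = h" unfolding cap_minimizer_def Cap_eq_cap_real
    by (rule the_equality) (use h cap_minimizer_unique in auto)
  with h show "cap_admissible W (cap_minimizer W)" "norm2 (cap_minimizer W) = cap_real W"
    by simp_all
qed

subsection \<open>The test function of the blowup\<close>

lemma geodesic_enters_blowup:
  assumes "w \<in> W" "\<rho> \<le> cap_potential W w"
  obtains k where "k \<le> length w"
    "\<And>j. j \<le> length w \<Longrightarrow> take j w \<in> (\<Union>e\<in>cap_blowup W \<rho>. subtree e) \<longleftrightarrow> k \<le> j"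
    "\<And>j. j < k \<Longrightarrow> cap_potential W (take j w) < \<rho>"
proof -
  define H where "H = cap_potential W"
  define P where "P k \<longleftrightarrow> \<rho> \<le> H (take k w)" for k
  define k where "k = (LEAST k. P k)"
  have reach: "P (length w)" using assms(2) unfolding P_def H_def by simp
  have k_le: "k \<le> length w" unfolding k_def by (rule Least_le[of P, OF reach])
  have H_k: "\<rho> \<le> H (take k w)" using LeastI[of P, OF reach] unfolding k_def P_def .
  have below: "H (take j w) < \<rho>" if "j < k" for j
    using not_less_Least[OF that[unfolded k_def]] unfolding P_def by simp
  have "take k w \<in> cap_blowup W \<rho>"
  proof -
    have "take k w \<in> geodesic_union W"
      using assms(1) tle_take_take[OF k_le, of w] unfolding geodesic_union_def geod_def by auto
    moreover have "H x \<le> \<rho>" if "tless x (take k w)" for x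
    proof -
      have "tle x (take k w)" "x \<noteq> take k w" using that unfolding tless_def by auto
      then have "length x \<le> k" "x = take (length x) w" "length x \<noteq> k"
        using k_le unfolding tle_iff_take by (auto simp: min_def split: if_splits)
      then show ?thesis using below[of "length x"] by simp
    qed
    ultimately show ?thesis using H_k unfolding cap_blowup_def H_def by auto
  qed
  moreover have "k \<le> j" if "j \<le> length w" "tle e (take j w)" "e \<in> cap_blowup W \<rho>" for j e
  proof -
    have "length e \<le> j" "e = take (length e) w"
      using that(1,2) unfolding tle_iff_take by (auto simp: min_def split: if_splits)
    moreover have "\<rho> \<le> H e" using that(3) unfolding cap_blowup_def H_def by auto
    ultimately show ?thesis using below[of "length e"] by fastforce
  qed
  ultimately have "take j w \<in> (\<Union>e\<in>cap_blowup W \<rho>. subtree e) \<longleftrightarrow> k \<le> j"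
    if "j \<le> length w" for j
    using that tle_take_take[of k j w] unfolding subtree_def by auto
  then show thesis using that k_le below unfolding H_def by blast
qed

definition cap_blowup_test :: "vertex set \<Rightarrow> real \<Rightarrow> vertex \<Rightarrow> real" where
  "cap_blowup_test W \<rho> x =
     (if x \<in> (\<Union>e\<in>cap_blowup W \<rho>. subtree e) then cap_minimizer W x / (1 - \<rho>) else 0)"

lemma Iop_cap_blowup_test_ge:
  assumes "w \<in> W" "0 \<le> \<rho>" "\<rho> < 1"
  shows "1 \<le> Iop (cap_blowup_test W \<rho>) w"
proof -
  define h where "h = cap_minimizer W"
  define n where "n = length w"
  define f where "f = cap_blowup_test W \<rho>"
  have H_w: "1 \<le> Iop h w"
    using cap_minimizer(1) assms(1) unfolding h_def cap_admissible_def by auto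
  then have "\<rho> \<le> cap_potential W w"
    using assms(3) unfolding cap_potential_def h_def by simp
  then obtain k where k_le: "k \<le> n"
    and inside: "\<And>j. j \<le> n \<Longrightarrow> take j w \<in> (\<Union>e\<in>cap_blowup W \<rho>. subtree e) \<longleftrightarrow> k \<le> j"
    and below: "\<And>j. j < k \<Longrightarrow> cap_potential W (take j w) < \<rho>"
    using geodesic_enters_blowup[OF assms(1)] unfolding n_def by blast
  have "(\<Sum>j<k. h (take j w)) \<le> \<rho>"
  proof (cases k)
    case (Suc p)
    then have "(\<Sum>j<k. h (take j w)) = Iop h (take p w)"
      using Iop_take_eq_sum[of p w h] k_le n_def by (simp add: lessThan_Suc_atMost)
    then show ?thesis using below[of p] Suc unfolding cap_potential_def h_def by simp
  qed (use assms in simp)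
  moreover have "Iop h w = (\<Sum>j<k. h (take j w)) + (\<Sum>j\<in>{k..n}. h (take j w))"
    unfolding Iop_eq_sum_take n_def[symmetric] by (rule sum_atMost_split[OF k_le])
  ultimately have mass: "1 - \<rho> \<le> (\<Sum>j\<in>{k..n}. h (take j w))" using H_w by linarith
  have "Iop f w = (\<Sum>j<k. f (take j w)) + (\<Sum>j\<in>{k..n}. f (take j w))"
    unfolding Iop_eq_sum_take n_def[symmetric] by (rule sum_atMost_split[OF k_le])
  also have "(\<Sum>j<k. f (take j w)) = 0"
    using inside k_le unfolding f_def cap_blowup_test_def by (intro sum.neutral) auto
  also have "(\<Sum>j\<in>{k..n}. f (take j w)) = (\<Sum>j\<in>{k..n}. h (take j w)) / (1 - \<rho>)"
    using inside unfolding f_def cap_blowup_test_def h_def sum_divide_distrib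
    by (intro sum.cong) auto
  finally show ?thesis using mass assms(3) unfolding f_def by simp
qed

lemma norm2_cap_blowup_test_le:
  assumes "\<rho> < 1"
  shows "in_l2 (cap_blowup_test W \<rho>)" "norm2 (cap_blowup_test W \<rho>) \<le> cap_real W / (1 - \<rho>)\<^sup>2"
proof -
  have l2: "in_l2 (\<lambda>x. cap_minimizer W x / (1 - \<rho>))"
    using cap_minimizer(1) in_l2_divide unfolding cap_admissible_def by blast
  have le: "\<bar>cap_blowup_test W \<rho> x\<bar> \<le> \<bar>cap_minimizer W x / (1 - \<rho>)\<bar>" for x
    unfolding cap_blowup_test_def by simp
  show "in_l2 (cap_blowup_test W \<rho>)" by (rule norm2_mono(1)[OF l2 le])
  show "norm2 (cap_blowup_test W \<rho>) \<le> cap_real W / (1 - \<rho>)\<^sup>2"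
    using norm2_mono(2)[OF l2 le] by (simp add: norm2_divide cap_minimizer(2))
qed

lemma condCap_cap_blowup_le:
  assumes "0 \<le> \<rho>" "\<rho> < 1"
  shows "condCap (cap_blowup W \<rho>) W \<le> ereal (cap_real W / (1 - \<rho>)\<^sup>2)"
proof -
  have "{x. cap_blowup_test W \<rho> x \<noteq> 0} \<subseteq> (\<Union>e\<in>cap_blowup W \<rho>. subtree e)"
    unfolding cap_blowup_test_def by auto
  then have "condCap (cap_blowup W \<rho>) W \<le> ereal (norm2 (cap_blowup_test W \<rho>))"
    unfolding condCap_def
    using norm2_cap_blowup_test_le(1)[OF assms(2)] Iop_cap_blowup_test_ge[OF _ assms]
    by (intro INF_lower) blast
  also have "\<dots> \<le> ereal (cap_real W / (1 - \<rho>)\<^sup>2)"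
    using norm2_cap_blowup_test_le(2)[OF assms(2)] by simp
  finally show ?thesis .
qed

theorem mainTheorem4:
  fixes W :: "vertex set" and \<rho> :: real
  assumes "stopping_time W" and "0 < \<rho>" and "\<rho> < 1"
    and "Cap W \<le> ereal ((1 - \<rho>)\<^sup>2 / 4)"
  shows "condCap (cap_blowup W \<rho>) W \<le> ereal (4 / (1 - \<rho>)\<^sup>2) * Cap W"
proof -
  have "condCap (cap_blowup W \<rho>) W \<le> ereal (cap_real W / (1 - \<rho>)\<^sup>2)"
    using assms(2,3) by (intro condCap_cap_blowup_le) simp_all
  also have "\<dots> \<le> ereal (4 / (1 - \<rho>)\<^sup>2 * cap_real W)"
    using cap_real_nonneg[of W] by (auto intro!: divide_right_mono)
  also have "\<dots> = ereal (4 / (1 - \<rho>)\<^sup>2) * Cap W"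
    unfolding Cap_eq_cap_real by simp
  finally show ?thesis .
qed

end
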